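(* Over any finite alphabet $A$, the logics $\mathrm{TL}[\mathrm{Th}]$, $\mathrm{TL}[\mathrm{BTh}]$, $\mathrm{TL}[\mathrm{Inv}]$, $\mathrm{TL}[\mathrm{BInv}]$, $FO^2[<,\mathrm{Th}]$ and $FO^2[<,\mathrm{Inv}]$ all define the same family of languages $L\subseteq A^*$.
   Context: Words $w\in A^*$ have positions $1,\dots,|w|$, $w(i)$ the $i$-th letter. First-order logic uses $<$ and unary predicates $a(x)$ ($a\in A$); sentences define languages, and in the empty word existential sentences are false and universal ones true. $a(x,y)$ abbreviates $\exists z(x<z\wedge z<y\wedge a(z))$; $(a,k)(x,y)$ (for $k\ge0$) means $x<y$ and at least $k$ positions strictly between $x$ and $y$ carry the letter $a$. $FO^2[<,\mathrm{Inv}]$ is the two-variable logic with $<$, $a(x)$ and $a(x,y)$; $FO^2[<,\mathrm{Th}]$ is the two-variable logic with $<$, $a(x)$ and all $(a,k)(x,y)$. Temporal logic: a threshold constraint is an expression $\#B\sim c$ with $B\subseteq A$, integer $c\ge0$, and $\sim\in\{<,\le,>,\ge,=\}$; for $1\le i<j\le|w|$, $(w,i,j)$ satisfies it if $|\{k: i<k<j,\ w(k)\in B\}|\sim c$; satisfaction extends to boolean combinations of constraints in the obvious way. Temporal formulas are built from atomic formulas $a\in A$ by $\wedge,\vee,\neg$ and modalities $\mathsf{F}_g\phi$, $\mathsf{P}_g\phi$ where $g$ is a (boolean combination of) constraint(s). They are interpreted in marked words $(w,i)$, $1\le i\le|w|$: $(w,i)\models a$ iff $w(i)=a$; $(w,i)\models\mathsf{F}_g\phi$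 iff there is $j>i$ with $(w,i,j)$ satisfying $g$ and $(w,j)\models\phi$; $(w,i)\models\mathsf{P}_g\phi$ iff there is $j<i$ with $(w,j,i)$ satisfying $g$ and $(w,j)\models\phi$. A formula defines the language of words $w$ with $(w,1)\models\phi$. $\mathrm{TL}[\mathrm{BTh}]$ allows $g$ to be any boolean combination of threshold constraints; $\mathrm{TL}[\mathrm{Th}]$ restricts $g$ to a single (atomic) threshold constraint; $\mathrm{TL}[\mathrm{Inv}]$ restricts $g$ to a single constraint of the form $\#B=0$ (invariant constraint); $\mathrm{TL}[\mathrm{BInv}]$ allows boolean combinations of invariant constraints. *)

theory Defs
  imports Main
begin

text \<open>Words over the finite alphabet 'a (the alphabet A is UNIV :: 'a set) are lists.
  Positions are 0-indexed internally: paper position i corresponds to list index i - 1.\<close>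

datatype cmp = CLt | CLe | CGt | CGe | CEq

fun cmp_sem :: "cmp \<Rightarrow> nat \<Rightarrow> nat \<Rightarrow> bool" where
  "cmp_sem CLt n c = (n < c)"
| "cmp_sem CLe n c = (n \<le> c)"
| "cmp_sem CGt n c = (n > c)"
| "cmp_sem CGe n c = (n \<ge> c)"
| "cmp_sem CEq n c = (n = c)"

datatype 'a constr = Constr "'a set" cmp nat

datatype 'a guard = GAtom "'a constr" | GNot "'a guard" | GAnd "'a guard" "'a guard"
  | GOr "'a guard" "'a guard"

definition count_between :: "'a list \<Rightarrow> nat \<Rightarrow> nat \<Rightarrow> 'a set \<Rightarrow> nat" where
  "count_between w i j B = card {k. i < k \<and> k < j \<and> w ! k \<in> B}"

fun constr_sem :: "'a list \<Rightarrow> nat \<Rightarrow> nat \<Rightarrow> 'a constr \<Rightarrow> bool" where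
  "constr_sem w i j (Constr B r c) = cmp_sem r (count_between w i j B) c"

fun guard_sem :: "'a list \<Rightarrow> nat \<Rightarrow> nat \<Rightarrow> 'a guard \<Rightarrow> bool" where
  "guard_sem w i j (GAtom c) = constr_sem w i j c"
| "guard_sem w i j (GNot g) = (\<not> guard_sem w i j g)"
| "guard_sem w i j (GAnd g h) = (guard_sem w i j g \<and> guard_sem w i j h)"
| "guard_sem w i j (GOr g h) = (guard_sem w i j g \<or> guard_sem w i j h)"

datatype 'a tl = TLetter 'a | TAnd "'a tl" "'a tl" | TOr "'a tl" "'a tl" | TNot "'a tl"
  | TF "'a guard" "'a tl" | TP "'a guard" "'a tl"

fun tl_sat :: "'a list \<Rightarrow> nat \<Rightarrow> 'a tl \<Rightarrow> bool" where
  "tl_sat w i (TLetter a) = (w ! i = a)"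
| "tl_sat w i (TAnd \<phi> \<psi>) = (tl_sat w i \<phi> \<and> tl_sat w i \<psi>)"
| "tl_sat w i (TOr \<phi> \<psi>) = (tl_sat w i \<phi> \<or> tl_sat w i \<psi>)"
| "tl_sat w i (TNot \<phi>) = (\<not> tl_sat w i \<phi>)"
| "tl_sat w i (TF g \<phi>) = (\<exists>j. i < j \<and> j < length w \<and> guard_sem w i j g \<and> tl_sat w j \<phi>)"
| "tl_sat w i (TP g \<phi>) = (\<exists>j. j < i \<and> guard_sem w j i g \<and> tl_sat w j \<phi>)"

text \<open>Language of a formula: words w with (w,1) |= phi (first position = index 0);
  in particular only nonempty words.\<close>
definition tl_lang :: "'a tl \<Rightarrow> 'a list set" where
  "tl_lang \<phi> = {w. w \<noteq> [] \<and> tl_sat w 0 \<phi>}"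

fun tl_guards :: "'a tl \<Rightarrow> 'a guard set" where
  "tl_guards (TLetter a) = {}"
| "tl_guards (TAnd \<phi> \<psi>) = tl_guards \<phi> \<union> tl_guards \<psi>"
| "tl_guards (TOr \<phi> \<psi>) = tl_guards \<phi> \<union> tl_guards \<psi>"
| "tl_guards (TNot \<phi>) = tl_guards \<phi>"
| "tl_guards (TF g \<phi>) = insert g (tl_guards \<phi>)"
| "tl_guards (TP g \<phi>) = insert g (tl_guards \<phi>)"

definition is_inv_constr :: "'a constr \<Rightarrow> bool" where
  "is_inv_constr c \<longleftrightarrow> (\<exists>B. c = Constr B CEq 0)"

fun guard_atoms :: "'a guard \<Rightarrow> 'a constr set" where
  "guard_atoms (GAtom c) = {c}"
| "guard_atoms (GNot g) = guard_atoms g"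
| "guard_atoms (GAnd g h) = guard_atoms g \<union> guard_atoms h"
| "guard_atoms (GOr g h) = guard_atoms g \<union> guard_atoms h"

definition guard_Th :: "'a guard \<Rightarrow> bool" where
  "guard_Th g \<longleftrightarrow> (\<exists>c. g = GAtom c)"

definition guard_BTh :: "'a guard \<Rightarrow> bool" where
  "guard_BTh g \<longleftrightarrow> True"

definition guard_Inv :: "'a guard \<Rightarrow> bool" where
  "guard_Inv g \<longleftrightarrow> (\<exists>c. g = GAtom c \<and> is_inv_constr c)"

definition guard_BInv :: "'a guard \<Rightarrow> bool" where
  "guard_BInv g \<longleftrightarrow> (\<forall>c \<in> guard_atoms g. is_inv_constr c)"

definition tl_family :: "('a guard \<Rightarrow> bool) \<Rightarrow> 'a list set set" where
  "tl_family G = {tl_lang \<phi> | \<phi>. \<forall>g \<in> tl_guards \<phi>. G g}"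

datatype var = VX | VY

datatype 'a fo2 = FLess var var | FEq var var | FLetter 'a var
  | FBtw 'a var var
  | FThr 'a nat var var
  | FNot "'a fo2" | FAnd "'a fo2" "'a fo2" | FOr "'a fo2" "'a fo2" | FEx var "'a fo2"

fun fo_sat :: "'a list \<Rightarrow> (var \<Rightarrow> nat) \<Rightarrow> 'a fo2 \<Rightarrow> bool" where
  "fo_sat w s (FLess x y) = (s x < s y)"
| "fo_sat w s (FEq x y) = (s x = s y)"
| "fo_sat w s (FLetter a x) = (w ! s x = a)"
| "fo_sat w s (FBtw a x y) = (\<exists>z. s x < z \<and> z < s y \<and> w ! z = a)"
| "fo_sat w s (FThr a k x y) = (s x < s y \<and> card {z. s x < z \<and> z < s y \<and> w ! z = a} \<ge> k)"
| "fo_sat w s (FNot \<phi>) = (\<not> fo_sat w s \<phi>)"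
| "fo_sat w s (FAnd \<phi> \<psi>) = (fo_sat w s \<phi> \<and> fo_sat w s \<psi>)"
| "fo_sat w s (FOr \<phi> \<psi>) = (fo_sat w s \<phi> \<or> fo_sat w s \<psi>)"
| "fo_sat w s (FEx x \<phi>) = (\<exists>p < length w. fo_sat w (s(x := p)) \<phi>)"

fun fo_free :: "'a fo2 \<Rightarrow> var set" where
  "fo_free (FLess x y) = {x, y}"
| "fo_free (FEq x y) = {x, y}"
| "fo_free (FLetter a x) = {x}"
| "fo_free (FBtw a x y) = {x, y}"
| "fo_free (FThr a k x y) = {x, y}"
| "fo_free (FNot \<phi>) = fo_free \<phi>"
| "fo_free (FAnd \<phi> \<psi>) = fo_free \<phi> \<union> fo_free \<psi>"
| "fo_free (FOr \<phi> \<psi>) = fo_free \<phi> \<union> fo_free \<psi>"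
| "fo_free (FEx x \<phi>) = fo_free \<phi> - {x}"

fun uses_Btw :: "'a fo2 \<Rightarrow> bool" where
  "uses_Btw (FBtw a x y) = True"
| "uses_Btw (FNot \<phi>) = uses_Btw \<phi>"
| "uses_Btw (FAnd \<phi> \<psi>) = (uses_Btw \<phi> \<or> uses_Btw \<psi>)"
| "uses_Btw (FOr \<phi> \<psi>) = (uses_Btw \<phi> \<or> uses_Btw \<psi>)"
| "uses_Btw (FEx x \<phi>) = uses_Btw \<phi>"
| "uses_Btw _ = False"

fun uses_Thr :: "'a fo2 \<Rightarrow> bool" where
  "uses_Thr (FThr a k x y) = True"
| "uses_Thr (FNot \<phi>) = uses_Thr \<phi>"
| "uses_Thr (FAnd \<phi> \<psi>) = (uses_Thr \<phi> \<or> uses_Thr \<psi>)"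
| "uses_Thr (FOr \<phi> \<psi>) = (uses_Thr \<phi> \<or> uses_Thr \<psi>)"
| "uses_Thr (FEx x \<phi>) = uses_Thr \<phi>"
| "uses_Thr _ = False"

text \<open>Language of a sentence (closed formula; the assignment is irrelevant).\<close>
definition fo_lang :: "'a fo2 \<Rightarrow> 'a list set" where
  "fo_lang \<phi> = {w. fo_sat w (\<lambda>_. 0) \<phi>}"

text \<open>FO2[<,Inv]: atoms <, =, a(x), a(x,y).  FO2[<,Th]: atoms <, =, a(x), (a,k)(x,y).\<close>
definition fo2_Inv_family :: "'a list set set" where
  "fo2_Inv_family = {fo_lang \<phi> | \<phi>. fo_free \<phi> = {} \<and> \<not> uses_Thr \<phi>}"

definition fo2_Th_family :: "'a list set set" where
  "fo2_Th_family = {fo_lang \<phi> | \<phi>. fo_free \<phi> = {} \<and> \<not> uses_Btw \<phi>}"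

end

theory Submission
  imports Defs
begin

text \<open>A guard, even a boolean combination of threshold constraints, only sees the letter counts
  of the segment between the two positions, capped at a bound \<open>M\<close> above all its constants. Hence
  \<open>F\<^sub>g \<phi>\<close> is a finite disjunction over the capped count vectors satisfying \<open>g\<close>, and each disjunct
  can be written with invariant guards: it guesses, one by one, the positions carrying the letters
  still owed, and in between allows only letters whose count is no longer constrained. Past
  modalities are reduced to future ones by reversing the word.

  A formula of FO2 with free variables \<open>x, y\<close> is a finite disjunction of clauses ``\<open>X\<close> holds at
  \<open>x\<close>, \<open>Y\<close> holds at \<open>y\<close>, \<open>x\<close> and \<open>y\<close> are in a given order and the segment between them satisfies
  a guard''. Clauses are closed under the boolean connectives, and quantifying one variable away
  yields temporal formulas with threshold guards; so on nonempty words FO2[<,Th] is captured by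
  TL[BTh]. Conversely TL[Inv] has the usual two-variable translation, and \<open>a(x,y)\<close> is
  \<open>(a,1)(x,y)\<close>.\<close>

lemma finite_between [simp]: "finite {k::nat. i < k \<and> k < j \<and> P k}"
  by (rule finite_subset[of _ "{..<j}"]) auto

lemma count_between_singleton:
  "count_between w i j {a} = card {k. i < k \<and> k < j \<and> w ! k = a}"
  by (simp add: count_between_def)

lemma count_between_eq_0_iff:
  "count_between w i j B = 0 \<longleftrightarrow> (\<forall>k. i < k \<longrightarrow> k < j \<longrightarrow> w ! k \<notin> B)"
  unfolding count_between_def by (subst card_eq_0_iff) auto

lemma count_between_self [simp]: "count_between w i i B = 0"
  by (simp add: count_between_eq_0_iff)

lemma count_between_eq_sum:
  assumes "finite B"
  shows "count_between w i j B = (\<Sum>a\<in>B. count_between w i j {a})"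
proof -
  have "{k. i < k \<and> k < j \<and> w ! k \<in> B} = (\<Union>a\<in>B. {k. i < k \<and> k < j \<and> w ! k = a})"
    by auto
  moreover have "card (\<Union>a\<in>B. {k. i < k \<and> k < j \<and> w ! k = a})
      = (\<Sum>a\<in>B. card {k. i < k \<and> k < j \<and> w ! k = a})"
    by (rule card_UN_disjoint) (use assms in auto)
  ultimately show ?thesis
    by (simp add: count_between_def)
qed

lemma ex_letter_between_iff:
  "(\<exists>k. i < k \<and> k < j \<and> w ! k = a) \<longleftrightarrow> 0 < count_between w i j {a}"
  using count_between_eq_0_iff[of w i j "{a}"] by auto

lemma count_between_split:
  assumes "i < p" "p < j"
  shows "count_between w i j B
    = count_between w i p B + (if w ! p \<in> B then 1 else 0) + count_between w p j B"
proof -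
  let ?S = "\<lambda>i j. {k. i < k \<and> k < j \<and> w ! k \<in> B}" and ?P = "{k. k = p \<and> w ! k \<in> B}"
  have split: "?S i j = ?S i p \<union> (?P \<union> ?S p j)"
    using assms by auto
  have "card (?S i j) = card (?S i p) + card (?P \<union> ?S p j)"
    unfolding split by (rule card_Un_disjoint) auto
  also have "card (?P \<union> ?S p j) = card ?P + card (?S p j)"
    by (rule card_Un_disjoint) auto
  also have "?P = (if w ! p \<in> B then {p} else {})"
    by auto
  finally show ?thesis
    unfolding count_between_def by simp
qed

definition list_of :: "'a set \<Rightarrow> 'a list" where
  "list_of B = (SOME xs. set xs = B)"

lemma set_list_of [simp]: "finite B \<Longrightarrow> set (list_of B) = B"
  unfolding list_of_def by (metis (mono_tags) finite_list someI_ex)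

definition tl_false :: "'a tl" where
  "tl_false = TAnd (TLetter undefined) (TNot (TLetter undefined))"

definition tl_true :: "'a tl" where
  "tl_true = TNot tl_false"

fun tl_Disj :: "'a tl list \<Rightarrow> 'a tl" where
  "tl_Disj [] = tl_false"
| "tl_Disj (\<phi> # \<phi>s) = TOr \<phi> (tl_Disj \<phi>s)"

lemma tl_sat_false [simp]: "\<not> tl_sat w i tl_false"
  by (simp add: tl_false_def)

lemma tl_sat_true [simp]: "tl_sat w i tl_true"
  by (simp add: tl_true_def)

lemma tl_sat_Disj [simp]: "tl_sat w i (tl_Disj \<phi>s) \<longleftrightarrow> (\<exists>\<phi>\<in>set \<phi>s. tl_sat w i \<phi>)"
  by (induction \<phi>s) auto

lemma tl_guards_false [simp]: "tl_guards tl_false = {}"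
  by (simp add: tl_false_def)

lemma tl_guards_Disj [simp]: "tl_guards (tl_Disj \<phi>s) = (\<Union>\<phi>\<in>set \<phi>s. tl_guards \<phi>)"
  by (induction \<phi>s) auto

definition inv_guard :: "'a set \<Rightarrow> 'a guard" where
  "inv_guard B = GAtom (Constr B CEq 0)"

lemma guard_sem_inv_guard [simp]:
  "guard_sem w i j (inv_guard B) \<longleftrightarrow> (\<forall>k. i < k \<longrightarrow> k < j \<longrightarrow> w ! k \<notin> B)"
  by (simp add: inv_guard_def count_between_eq_0_iff)

lemma guard_Inv_inv_guard [simp]: "guard_Inv (inv_guard B)"
  by (simp add: guard_Inv_def inv_guard_def is_inv_constr_def)

section \<open>Guards depend only on capped letter counts\<close>

fun guard_eval :: "('a \<Rightarrow> nat) \<Rightarrow> 'a guard \<Rightarrow> bool" where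
  "guard_eval c (GAtom (Constr B r k)) = cmp_sem r (\<Sum>a\<in>B. c a) k"
| "guard_eval c (GNot g) = (\<not> guard_eval c g)"
| "guard_eval c (GAnd g h) = (guard_eval c g \<and> guard_eval c h)"
| "guard_eval c (GOr g h) = (guard_eval c g \<or> guard_eval c h)"

fun guard_bound :: "'a guard \<Rightarrow> nat" where
  "guard_bound (GAtom (Constr B r k)) = k"
| "guard_bound (GNot g) = guard_bound g"
| "guard_bound (GAnd g h) = max (guard_bound g) (guard_bound h)"
| "guard_bound (GOr g h) = max (guard_bound g) (guard_bound h)"

lemma guard_sem_eq_guard_eval:
  "guard_sem w i j g = guard_eval (\<lambda>a. count_between w i j {a}) (g :: 'a::finite guard)"
proof (induction g)
  case (GAtom c)
  obtain B r k where "c = Constr B r k" by (cases c)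
  then show ?case by (simp add: count_between_eq_sum[of B])
qed auto

lemma cmp_sem_above: "k < m \<Longrightarrow> k < n \<Longrightarrow> cmp_sem r m k = cmp_sem r n k"
  by (cases r) auto

lemma guard_eval_min:
  assumes "guard_bound g < M"
  shows "guard_eval (\<lambda>a. min (c a) M) g = guard_eval c (g :: 'a::finite guard)"
  using assms
proof (induction g)
  case (GAtom x)
  obtain B r k where x: "x = Constr B r k" by (cases x)
  with GAtom have "k < M" by simp
  show ?case
  proof (cases "\<exists>a\<in>B. M \<le> c a")
    case True
    then obtain a where "a \<in> B" "M \<le> c a" by blast
    then have "M \<le> (\<Sum>a\<in>B. min (c a) M)" "M \<le> (\<Sum>a\<in>B. c a)"
      using member_le_sum[of a B "\<lambda>a. min (c a) M"] member_le_sum[of a B c] by auto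
    with \<open>k < M\<close> have "cmp_sem r (\<Sum>a\<in>B. min (c a) M) k = cmp_sem r (\<Sum>a\<in>B. c a) k"
      by (intro cmp_sem_above) auto
    with x show ?thesis by simp
  next
    case False
    then have "(\<Sum>a\<in>B. min (c a) M) = (\<Sum>a\<in>B. c a)" by (intro sum.cong) auto
    then show ?thesis using x by simp
  qed
qed auto

section \<open>Counting requirements expressed with invariant guards\<close>

text \<open>A requirement \<open>r\<close> demands, for each letter \<open>a\<close>, exactly \<open>snd (r a)\<close> occurrences
  if \<open>fst (r a)\<close> holds and at least \<open>snd (r a)\<close> occurrences otherwise.\<close>

type_synonym 'a req = "'a \<Rightarrow> bool \<times> nat"

definition meets_req :: "'a list \<Rightarrow> nat \<Rightarrow> nat \<Rightarrow> 'a req \<Rightarrow> bool" where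
  "meets_req w i j r \<longleftrightarrow> (\<forall>a. if fst (r a) then count_between w i j {a} = snd (r a)
                                else snd (r a) \<le> count_between w i j {a})"

definition req_free :: "'a req \<Rightarrow> 'a set" where
  "req_free r = {a. \<not> fst (r a) \<and> snd (r a) = 0}"

definition req_demanded :: "'a req \<Rightarrow> 'a set" where
  "req_demanded r = {a. 0 < snd (r a)}"

definition req_consume :: "'a req \<Rightarrow> 'a \<Rightarrow> 'a req" where
  "req_consume r b = r(b := (fst (r b), snd (r b) - 1))"

definition req_total :: "'a::finite req \<Rightarrow> nat" where
  "req_total r = (\<Sum>a\<in>UNIV. snd (r a))"

lemma req_total_consume:
  assumes "b \<in> req_demanded r"
  shows "req_total (req_consume r b) = req_total r - 1"
proof -
  have "req_total r = snd (r b) + (\<Sum>a\<in>UNIV - {b}. snd (r a))"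
    unfolding req_total_def by (simp add: sum.remove)
  moreover have "(\<Sum>a\<in>UNIV - {b}. snd (req_consume r b a)) = (\<Sum>a\<in>UNIV - {b}. snd (r a))"
    by (rule sum.cong) (auto simp: req_consume_def)
  then have "req_total (req_consume r b) = snd (r b) - 1 + (\<Sum>a\<in>UNIV - {b}. snd (r a))"
    unfolding req_total_def by (simp add: sum.remove[of UNIV b] req_consume_def)
  ultimately show ?thesis
    using assms by (simp add: req_demanded_def)
qed

lemma req_demanded_empty_iff: "req_demanded r = {} \<longleftrightarrow> req_total r = 0"
  by (auto simp: req_demanded_def req_total_def)

lemma meets_req_no_demand:
  assumes "req_demanded r = {}"
  shows "meets_req w i j r \<longleftrightarrow> (\<forall>k. i < k \<longrightarrow> k < j \<longrightarrow> w ! k \<in> req_free r)"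
  using assms
  by (auto simp: meets_req_def req_free_def req_demanded_def count_between_eq_0_iff
      split: if_splits)

lemma meets_req_consume:
  assumes "i < p" "p < j" "w ! p \<in> req_demanded r"
    and free: "\<forall>k. i < k \<longrightarrow> k < p \<longrightarrow> w ! k \<in> req_free r"
  shows "meets_req w i j r \<longleftrightarrow> meets_req w p j (req_consume r (w ! p))"
  unfolding meets_req_def
proof (rule all_cong1, goal_cases)
  case (1 a)
  have split: "count_between w i j {a}
      = count_between w i p {a} + (if w ! p = a then 1 else 0) + count_between w p j {a}"
    using count_between_split[OF assms(1,2), of w "{a}"] by simp
  show ?case
  proof (cases "a \<in> req_free r")
    case True
    then have "w ! p \<noteq> a" using assms(3) by (auto simp: req_free_def req_demanded_def)
    with True show ?thesis by (simp add: req_free_def req_consume_def)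
  next
    case False
    with free have "count_between w i p {a} = 0" by (auto simp: count_between_eq_0_iff)
    with split assms(3) show ?thesis
      by (cases "w ! p = a") (auto simp: req_consume_def req_demanded_def)
  qed
qed

lemma meets_req_first_demanded:
  assumes "meets_req w i j r" "req_demanded r \<noteq> {}"
  obtains p where "i < p" "p < j" "w ! p \<in> req_demanded r"
    and "\<forall>k. i < k \<longrightarrow> k < p \<longrightarrow> w ! k \<in> req_free r"
proof -
  obtain b where b: "b \<in> req_demanded r" using assms(2) by blast
  moreover have "snd (r b) \<le> count_between w i j {b}"
    using assms(1) unfolding meets_req_def by (metis order_refl)
  ultimately have "count_between w i j {b} \<noteq> 0"
    by (simp add: req_demanded_def)
  then obtain k where k: "i < k \<and> k < j \<and> w ! k \<in> req_demanded r"
    using b by (auto simp: count_between_eq_0_iff)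
  define p where "p = (LEAST k. i < k \<and> k < j \<and> w ! k \<in> req_demanded r)"
  have p: "i < p \<and> p < j \<and> w ! p \<in> req_demanded r"
    unfolding p_def using k by (rule LeastI)
  have "w ! k \<in> req_free r" if "i < k" "k < p" for k
  proof -
    have "w ! k \<notin> req_demanded r"
      using not_less_Least[of k] that p unfolding p_def by fastforce
    moreover have "count_between w i j {w ! k} \<noteq> 0"
      using that p by (auto simp: count_between_eq_0_iff)
    ultimately show ?thesis
      using assms(1) by (auto simp: meets_req_def req_demanded_def req_free_def split: if_splits)
  qed
  with p that show ?thesis by blast
qed

lemma meets_req_step:
  assumes "req_demanded r \<noteq> {}"
  shows "meets_req w i j r \<longleftrightarrow> (\<exists>p. i < p \<and> p < j \<and> w ! p \<in> req_demanded r
      \<and> (\<forall>k. i < k \<longrightarrow> k < p \<longrightarrow> w ! k \<in> req_free r)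
      \<and> meets_req w p j (req_consume r (w ! p)))" (is "_ \<longleftrightarrow> (\<exists>p. ?step p)")
proof
  assume "meets_req w i j r"
  moreover obtain p where "i < p" "p < j" "w ! p \<in> req_demanded r"
    and "\<forall>k. i < k \<longrightarrow> k < p \<longrightarrow> w ! k \<in> req_free r"
    using \<open>meets_req w i j r\<close> assms by (rule meets_req_first_demanded)
  ultimately show "\<exists>p. ?step p"
    using meets_req_consume by blast
next
  assume "\<exists>p. ?step p"
  then show "meets_req w i j r"
    using meets_req_consume by blast
qed

text \<open>\<open>F_req n r \<phi>\<close> guesses the successive positions carrying a demanded letter; in
  between them only free letters may occur, which is an invariant guard.\<close>

primrec F_req :: "nat \<Rightarrow> 'a req \<Rightarrow> 'a tl \<Rightarrow> 'a tl" where
  "F_req 0 r \<phi> = TF (inv_guard (- req_free r)) \<phi>"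
| "F_req (Suc n) r \<phi> = tl_Disj (map (\<lambda>b. TF (inv_guard (- req_free r))
      (TAnd (TLetter b) (F_req n (req_consume r b) \<phi>))) (list_of (req_demanded r)))"

lemma tl_guards_F_req: "tl_guards (F_req n r \<phi>) \<subseteq> range inv_guard \<union> tl_guards \<phi>"
  by (induction n arbitrary: r) auto

lemma tl_sat_F_req:
  assumes "n = req_total r"
  shows "tl_sat w i (F_req n r \<phi>) \<longleftrightarrow> (\<exists>j. i < j \<and> j < length w \<and> meets_req w i j r \<and> tl_sat w j \<phi>)"
  using assms
proof (induction n arbitrary: r i)
  case 0
  then show ?case
    by (simp add: meets_req_no_demand req_demanded_empty_iff)
next
  case (Suc n)
  then have demanded: "req_demanded r \<noteq> {}"
    by (simp add: req_demanded_empty_iff)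
  have IH: "tl_sat w p (F_req n (req_consume r b) \<phi>)
      \<longleftrightarrow> (\<exists>j. p < j \<and> j < length w \<and> meets_req w p j (req_consume r b) \<and> tl_sat w j \<phi>)"
    if "b \<in> req_demanded r" for b p
  proof -
    have "n = req_total (req_consume r b)"
      using Suc.prems req_total_consume[OF that] by simp
    then show ?thesis by (rule Suc.IH)
  qed
  have "tl_sat w i (F_req (Suc n) r \<phi>) \<longleftrightarrow> (\<exists>p. i < p \<and> p < length w
      \<and> w ! p \<in> req_demanded r \<and> (\<forall>k. i < k \<longrightarrow> k < p \<longrightarrow> w ! k \<in> req_free r)
      \<and> tl_sat w p (F_req n (req_consume r (w ! p)) \<phi>))"
    by (auto simp: finite_subset[of "req_demanded r" UNIV])
  also have "\<dots> \<longleftrightarrow> (\<exists>p j. i < p \<and> p < j \<and> j < length w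
      \<and> w ! p \<in> req_demanded r \<and> (\<forall>k. i < k \<longrightarrow> k < p \<longrightarrow> w ! k \<in> req_free r)
      \<and> meets_req w p j (req_consume r (w ! p)) \<and> tl_sat w j \<phi>)"
    using IH by (auto dest: order.strict_trans) (meson order.strict_trans)
  also have "\<dots> \<longleftrightarrow> (\<exists>j. i < j \<and> j < length w \<and> meets_req w i j r \<and> tl_sat w j \<phi>)"
    using meets_req_step[OF demanded] by (auto dest: order.strict_trans)
  finally show ?case .
qed

section \<open>Eliminating threshold guards\<close>

definition capped_vectors :: "nat \<Rightarrow> ('a \<Rightarrow> nat) set" where
  "capped_vectors M = {v. \<forall>a. v a \<le> M}"

lemma finite_capped_vectors: "finite (capped_vectors M :: ('a::finite \<Rightarrow> nat) set)"
  using finite_set_of_finite_funs[of "UNIV :: 'a set" "{..M}" undefined]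
  unfolding capped_vectors_def by simp

text \<open>The vector \<open>v\<close> read as the counts capped at \<open>M\<close>: a value \<open>M\<close> only means ``at least \<open>M\<close>''.\<close>

definition cap_req :: "nat \<Rightarrow> ('a \<Rightarrow> nat) \<Rightarrow> 'a req" where
  "cap_req M v a = (v a < M, v a)"

lemma meets_cap_req_iff:
  assumes "v \<in> capped_vectors M"
  shows "meets_req w i j (cap_req M v) \<longleftrightarrow> (\<lambda>a. min (count_between w i j {a}) M) = v"
proof -
  have pointwise: "(if v a < M then c = v a else v a \<le> c) \<longleftrightarrow> min c M = v a" for a c
  proof -
    have "v a \<le> M" using assms by (simp add: capped_vectors_def)
    then show ?thesis by (cases "v a < M") (auto simp: min_def)
  qed
  then show ?thesis
    unfolding meets_req_def cap_req_def fun_eq_iff by (simp only: fst_conv snd_conv pointwise)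
qed

definition F_inv :: "'a::finite guard \<Rightarrow> 'a tl \<Rightarrow> 'a tl" where
  "F_inv g \<phi> = (let M = Suc (guard_bound g) in
     tl_Disj (map (\<lambda>v. F_req (req_total (cap_req M v)) (cap_req M v) \<phi>)
       (list_of {v \<in> capped_vectors M. guard_eval v g})))"

lemma tl_sat_F_inv: "tl_sat w i (F_inv g \<phi>) \<longleftrightarrow> tl_sat w i (TF g \<phi>)"
proof -
  define M where "M = Suc (guard_bound g)"
  let ?capped = "\<lambda>j a. min (count_between w i j {a}) M"
  have "finite {v \<in> capped_vectors M. guard_eval v g}"
    using finite_capped_vectors[of M] by (rule rev_finite_subset) auto
  then have "tl_sat w i (F_inv g \<phi>) \<longleftrightarrow> (\<exists>v \<in> capped_vectors M. guard_eval v g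
      \<and> (\<exists>j. i < j \<and> j < length w \<and> meets_req w i j (cap_req M v) \<and> tl_sat w j \<phi>))"
    unfolding F_inv_def M_def[symmetric] by (auto simp: tl_sat_F_req)
  also have "\<dots> \<longleftrightarrow> (\<exists>j. i < j \<and> j < length w \<and> guard_eval (?capped j) g \<and> tl_sat w j \<phi>)"
  proof -
    have "?capped j \<in> capped_vectors M" for j
      by (simp add: capped_vectors_def)
    then show ?thesis
      using meets_cap_req_iff by metis
  qed
  also have "\<dots> \<longleftrightarrow> tl_sat w i (TF g \<phi>)"
    by (simp add: guard_sem_eq_guard_eval guard_eval_min M_def)
  finally show ?thesis .
qed

lemma tl_guards_F_inv: "tl_guards (F_inv g \<phi>) \<subseteq> range inv_guard \<union> tl_guards \<phi>"
  unfolding F_inv_def using tl_guards_F_req by fastforce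

fun tl_mirror :: "'a tl \<Rightarrow> 'a tl" where
  "tl_mirror (TLetter a) = TLetter a"
| "tl_mirror (TAnd \<phi> \<psi>) = TAnd (tl_mirror \<phi>) (tl_mirror \<psi>)"
| "tl_mirror (TOr \<phi> \<psi>) = TOr (tl_mirror \<phi>) (tl_mirror \<psi>)"
| "tl_mirror (TNot \<phi>) = TNot (tl_mirror \<phi>)"
| "tl_mirror (TF g \<phi>) = TP g (tl_mirror \<phi>)"
| "tl_mirror (TP g \<phi>) = TF g (tl_mirror \<phi>)"

lemma tl_guards_mirror [simp]: "tl_guards (tl_mirror \<phi>) = tl_guards \<phi>"
  by (induction \<phi>) auto

lemma count_between_rev:
  assumes "i < j" "j < length w"
  shows "count_between (rev w) (length w - 1 - j) (length w - 1 - i) B = count_between w i j B"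
proof -
  let ?n = "length w"
  have "bij_betw (\<lambda>k. ?n - 1 - k) {k. i < k \<and> k < j \<and> w ! k \<in> B}
      {k. ?n - 1 - j < k \<and> k < ?n - 1 - i \<and> rev w ! k \<in> B}"
    by (rule bij_betw_byWitness[where f' = "\<lambda>k. ?n - 1 - k"]) (use assms in \<open>auto simp: rev_nth\<close>)
  then show ?thesis
    unfolding count_between_def by (simp add: bij_betw_same_card)
qed

lemma guard_sem_rev:
  assumes "i < j" "j < length w"
  shows "guard_sem (rev w) (length w - 1 - j) (length w - 1 - i) g = guard_sem w i j g"
proof (induction g)
  case (GAtom c)
  obtain B r k where "c = Constr B r k" by (cases c)
  then show ?case using count_between_rev[OF assms, of B] by simp
qed auto

lemma ex_reflect_future:
  fixes i n :: nat
  assumes "i < n"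
  shows "(\<exists>j. j < n - 1 - i \<and> P j) \<longleftrightarrow> (\<exists>j. i < j \<and> j < n \<and> P (n - 1 - j))"
proof
  assume "\<exists>j. j < n - 1 - i \<and> P j"
  then obtain j where "j < n - 1 - i" "P j" by blast
  moreover from this have "n - 1 - (n - 1 - j) = j" "i < n - 1 - j" "n - 1 - j < n" by arith+
  ultimately show "\<exists>j. i < j \<and> j < n \<and> P (n - 1 - j)"
    by (intro exI[of _ "n - 1 - j"]) simp
next
  assume "\<exists>j. i < j \<and> j < n \<and> P (n - 1 - j)"
  then obtain j where "i < j" "j < n" "P (n - 1 - j)" by blast
  then show "\<exists>j. j < n - 1 - i \<and> P j"
    by (intro exI[of _ "n - 1 - j"]) auto
qed

lemma ex_reflect_past:
  fixes i n :: nat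
  assumes "i < n"
  shows "(\<exists>j. n - 1 - i < j \<and> j < n \<and> P j) \<longleftrightarrow> (\<exists>j. j < i \<and> P (n - 1 - j))"
proof
  assume "\<exists>j. n - 1 - i < j \<and> j < n \<and> P j"
  then obtain j where "n - 1 - i < j" "j < n" "P j" by blast
  moreover from this have "n - 1 - (n - 1 - j) = j" "n - 1 - j < i" by arith+
  ultimately show "\<exists>j. j < i \<and> P (n - 1 - j)"
    by (intro exI[of _ "n - 1 - j"]) simp
next
  assume "\<exists>j. j < i \<and> P (n - 1 - j)"
  then obtain j where "j < i" "P (n - 1 - j)" by blast
  with assms show "\<exists>j. n - 1 - i < j \<and> j < n \<and> P j"
    by (intro exI[of _ "n - 1 - j"]) auto
qed

lemma tl_sat_mirror:
  "i < length w \<Longrightarrow> tl_sat (rev w) (length w - 1 - i) (tl_mirror \<phi>) \<longleftrightarrow> tl_sat w i \<phi>"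
proof (induction \<phi> arbitrary: i)
  case (TLetter a)
  then show ?case by (simp add: rev_nth Suc_diff_Suc)
next
  case (TF g \<phi>)
  let ?n = "length w"
  have "tl_sat (rev w) (?n - 1 - i) (tl_mirror (TF g \<phi>))
      \<longleftrightarrow> (\<exists>j. i < j \<and> j < ?n \<and> guard_sem (rev w) (?n - 1 - j) (?n - 1 - i) g
          \<and> tl_sat (rev w) (?n - 1 - j) (tl_mirror \<phi>))"
    using ex_reflect_future[OF TF.prems] by simp
  also have "\<dots> \<longleftrightarrow> tl_sat w i (TF g \<phi>)"
    using guard_sem_rev[of i _ w g] TF.IH by auto
  finally show ?case .
next
  case (TP g \<phi>)
  let ?n = "length w"
  have "tl_sat (rev w) (?n - 1 - i) (tl_mirror (TP g \<phi>))
      \<longleftrightarrow> (\<exists>j. j < i \<and> guard_sem (rev w) (?n - 1 - i) (?n - 1 - j) g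
          \<and> tl_sat (rev w) (?n - 1 - j) (tl_mirror \<phi>))"
    using ex_reflect_past[OF TP.prems] by simp
  also have "\<dots> \<longleftrightarrow> tl_sat w i (TP g \<phi>)"
    using guard_sem_rev[of _ i w g] TP.IH TP.prems by auto
  finally show ?case .
qed auto

fun inv_tl :: "'a::finite tl \<Rightarrow> 'a tl" where
  "inv_tl (TLetter a) = TLetter a"
| "inv_tl (TAnd \<phi> \<psi>) = TAnd (inv_tl \<phi>) (inv_tl \<psi>)"
| "inv_tl (TOr \<phi> \<psi>) = TOr (inv_tl \<phi>) (inv_tl \<psi>)"
| "inv_tl (TNot \<phi>) = TNot (inv_tl \<phi>)"
| "inv_tl (TF g \<phi>) = F_inv g (inv_tl \<phi>)"
| "inv_tl (TP g \<phi>) = tl_mirror (F_inv g (tl_mirror (inv_tl \<phi>)))"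

lemma tl_sat_mirror_rev:
  "i < length w \<Longrightarrow> tl_sat w i (tl_mirror \<phi>) \<longleftrightarrow> tl_sat (rev w) (length w - 1 - i) \<phi>"
  using tl_sat_mirror[of "length w - 1 - i" "rev w" \<phi>] by simp

lemma tl_sat_inv_tl: "i < length w \<Longrightarrow> tl_sat w i (inv_tl \<phi>) \<longleftrightarrow> tl_sat w i \<phi>"
proof (induction \<phi> arbitrary: i)
  case (TF g \<phi>)
  then show ?case by (auto simp: tl_sat_F_inv)
next
  case (TP g \<phi>)
  have "tl_sat w i (inv_tl (TP g \<phi>)) \<longleftrightarrow> tl_sat (rev w) (length w - 1 - i) (tl_mirror (TP g (inv_tl \<phi>)))"
    using TP.prems by (simp add: tl_sat_mirror_rev tl_sat_F_inv)
  also have "\<dots> \<longleftrightarrow> tl_sat w i (TP g (inv_tl \<phi>))"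
    using TP.prems by (rule tl_sat_mirror)
  also have "\<dots> \<longleftrightarrow> tl_sat w i (TP g \<phi>)"
    using TP by auto
  finally show ?case .
qed auto

lemma guard_Inv_inv_tl: "g \<in> tl_guards (inv_tl \<phi>) \<Longrightarrow> guard_Inv g"
  by (induction \<phi>) (use tl_guards_F_inv in fastforce)+

lemma tl_lang_inv_tl: "tl_lang (inv_tl \<phi>) = tl_lang \<phi>"
  unfolding tl_lang_def using tl_sat_inv_tl by fastforce

lemma tl_lang_in_tl_family_Inv: "tl_lang \<phi> \<in> tl_family (guard_Inv :: 'a::finite guard \<Rightarrow> bool)"
  unfolding tl_family_def using tl_lang_inv_tl guard_Inv_inv_tl by blast

section \<open>From FO2 to temporal logic\<close>

datatype rel = Before | Same | After

fun rel_holds :: "rel \<Rightarrow> nat \<Rightarrow> nat \<Rightarrow> bool" where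
  "rel_holds Before i j = (i < j)"
| "rel_holds Same i j = (i = j)"
| "rel_holds After i j = (j < i)"

lemma rel_holds_unique: "rel_holds q i j \<Longrightarrow> rel_holds q' i j \<Longrightarrow> q = q'"
  by (cases q; cases q') auto

lemma rel_holds_other:
  "(\<exists>q'\<in>set (filter (\<lambda>q'. q' \<noteq> q) [Before, Same, After]). rel_holds q' i j) \<longleftrightarrow> \<not> rel_holds q i j"
  by (cases q; cases "i < j"; cases "i = j") auto

text \<open>A clause \<open>(X, Y, q, G)\<close> describes pairs of positions \<open>(x, y)\<close>: \<open>X\<close> holds at \<open>x\<close>, \<open>Y\<close> at \<open>y\<close>,
  the positions are ordered by \<open>q\<close> and the segment strictly between them satisfies \<open>G\<close>.
  Every FO2 formula with free variables \<open>x, y\<close> is a finite disjunction of clauses.\<close>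

type_synonym 'a clause = "'a tl \<times> 'a tl \<times> rel \<times> 'a guard"

fun clause_sat :: "'a list \<Rightarrow> nat \<Rightarrow> nat \<Rightarrow> 'a clause \<Rightarrow> bool" where
  "clause_sat w i j (X, Y, q, G)
    \<longleftrightarrow> tl_sat w i X \<and> tl_sat w j Y \<and> rel_holds q i j \<and> guard_sem w (min i j) (max i j) G"

definition clauses_sat :: "'a list \<Rightarrow> nat \<Rightarrow> nat \<Rightarrow> 'a clause list \<Rightarrow> bool" where
  "clauses_sat w i j D \<longleftrightarrow> (\<exists>c\<in>set D. clause_sat w i j c)"

lemma clauses_sat_Nil [simp]: "\<not> clauses_sat w i j []"
  by (simp add: clauses_sat_def)

lemma clauses_sat_Cons [simp]: "clauses_sat w i j (c # D) \<longleftrightarrow> clause_sat w i j c \<or> clauses_sat w i j D"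
  by (simp add: clauses_sat_def)

lemma clauses_sat_append [simp]:
  "clauses_sat w i j (D @ E) \<longleftrightarrow> clauses_sat w i j D \<or> clauses_sat w i j E"
  by (auto simp: clauses_sat_def)

definition guard_true :: "'a guard" where
  "guard_true = GAtom (Constr {} CEq 0)"

lemma guard_sem_true [simp]: "guard_sem w i j guard_true"
  by (simp add: guard_true_def count_between_def)

definition clauses_at_x :: "'a tl \<Rightarrow> 'a clause list" where
  "clauses_at_x X = map (\<lambda>q. (X, tl_true, q, guard_true)) [Before, Same, After]"

definition clauses_at_y :: "'a tl \<Rightarrow> 'a clause list" where
  "clauses_at_y Y = map (\<lambda>q. (tl_true, Y, q, guard_true)) [Before, Same, After]"

lemma clauses_sat_at_x [simp]: "clauses_sat w i j (clauses_at_x X) \<longleftrightarrow> tl_sat w i X"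
  unfolding clauses_at_x_def by (cases "i < j"; cases "i = j") auto

lemma clauses_sat_at_y [simp]: "clauses_sat w i j (clauses_at_y Y) \<longleftrightarrow> tl_sat w j Y"
  unfolding clauses_at_y_def by (cases "i < j"; cases "i = j") auto

fun clause_conj :: "'a clause \<Rightarrow> 'a clause \<Rightarrow> 'a clause list" where
  "clause_conj (X, Y, q, G) (X', Y', q', G')
    = (if q = q' then [(TAnd X X', TAnd Y Y', q, GAnd G G')] else [])"

lemma clauses_sat_clause_conj:
  "clauses_sat w i j (clause_conj c c') \<longleftrightarrow> clause_sat w i j c \<and> clause_sat w i j c'"
  by (cases c; cases c') (auto dest: rel_holds_unique)

definition clauses_conj :: "'a clause list \<Rightarrow> 'a clause list \<Rightarrow> 'a clause list" where
  "clauses_conj D E = concat (map (\<lambda>c. concat (map (clause_conj c) E)) D)"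

lemma clauses_sat_conj [simp]:
  "clauses_sat w i j (clauses_conj D E) \<longleftrightarrow> clauses_sat w i j D \<and> clauses_sat w i j E"
proof -
  have "clauses_sat w i j (clauses_conj D E)
      \<longleftrightarrow> (\<exists>c\<in>set D. \<exists>c'\<in>set E. clauses_sat w i j (clause_conj c c'))"
    unfolding clauses_sat_def clauses_conj_def by auto
  then show ?thesis
    unfolding clauses_sat_clause_conj by (auto simp: clauses_sat_def)
qed

fun clause_neg :: "'a clause \<Rightarrow> 'a clause list" where
  "clause_neg (X, Y, q, G) = clauses_at_x (TNot X) @ clauses_at_y (TNot Y)
     @ map (\<lambda>q'. (tl_true, tl_true, q', guard_true)) (filter (\<lambda>q'. q' \<noteq> q) [Before, Same, After])
     @ [(tl_true, tl_true, q, GNot G)]"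

lemma clauses_sat_clause_neg: "clauses_sat w i j (clause_neg c) \<longleftrightarrow> \<not> clause_sat w i j c"
proof (cases c)
  case (fields X Y q G)
  have "clauses_sat w i j (map (\<lambda>q'. (tl_true, tl_true, q', guard_true)) L)
      \<longleftrightarrow> (\<exists>q'\<in>set L. rel_holds q' i j)" for L
    by (induction L) auto
  then show ?thesis
    unfolding fields using rel_holds_other[of q i j] by auto
qed

fun clauses_neg :: "'a clause list \<Rightarrow> 'a clause list" where
  "clauses_neg [] = clauses_at_x tl_true"
| "clauses_neg (c # D) = clauses_conj (clause_neg c) (clauses_neg D)"

lemma clauses_sat_neg [simp]: "clauses_sat w i j (clauses_neg D) \<longleftrightarrow> \<not> clauses_sat w i j D"
  by (induction D) (simp_all add: clauses_sat_clause_neg)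

lemma guard_sem_same: "guard_sem w i i G = guard_sem w' i' i' G"
proof (induction G)
  case (GAtom c)
  then show ?case by (cases c) simp
qed auto

definition guard_same_tl :: "'a guard \<Rightarrow> 'a tl" where
  "guard_same_tl G = (if guard_sem [] 0 0 G then tl_true else tl_false)"

lemma tl_sat_guard_same_tl [simp]: "tl_sat w i (guard_same_tl G) \<longleftrightarrow> guard_sem w i i G"
  unfolding guard_same_tl_def using guard_sem_same[of "[]" 0 G w i] by auto

fun clause_ex_y :: "'a clause \<Rightarrow> 'a tl" where
  "clause_ex_y (X, Y, q, G) = TAnd X (case q of
     Before \<Rightarrow> TF G Y | Same \<Rightarrow> TAnd Y (guard_same_tl G) | After \<Rightarrow> TP G Y)"

fun clause_ex_x :: "'a clause \<Rightarrow> 'a tl" where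
  "clause_ex_x (X, Y, q, G) = TAnd Y (case q of
     Before \<Rightarrow> TP G X | Same \<Rightarrow> TAnd X (guard_same_tl G) | After \<Rightarrow> TF G X)"

fun clause_diag :: "'a clause \<Rightarrow> 'a tl" where
  "clause_diag (X, Y, q, G) = (if q = Same then TAnd X (TAnd Y (guard_same_tl G)) else tl_false)"

lemma tl_sat_clause_ex_y:
  "i < length w \<Longrightarrow> tl_sat w i (clause_ex_y c) \<longleftrightarrow> (\<exists>p<length w. clause_sat w i p c)"
  by (cases c; cases "fst (snd (snd c))") (auto simp: min_def max_def not_le dest: order.strict_trans)

lemma tl_sat_clause_ex_x:
  "j < length w \<Longrightarrow> tl_sat w j (clause_ex_x c) \<longleftrightarrow> (\<exists>p<length w. clause_sat w p j c)"
  by (cases c; cases "fst (snd (snd c))") (auto simp: min_def max_def not_le dest: order.strict_trans)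

lemma tl_sat_clause_diag: "tl_sat w i (clause_diag c) \<longleftrightarrow> clause_sat w i i c"
  by (cases c; cases "fst (snd (snd c))") auto

definition clauses_ex_y :: "'a clause list \<Rightarrow> 'a tl" where
  "clauses_ex_y D = tl_Disj (map clause_ex_y D)"

definition clauses_ex_x :: "'a clause list \<Rightarrow> 'a tl" where
  "clauses_ex_x D = tl_Disj (map clause_ex_x D)"

definition clauses_diag :: "'a clause list \<Rightarrow> 'a tl" where
  "clauses_diag D = tl_Disj (map clause_diag D)"

lemma tl_sat_clauses_ex_y:
  "i < length w \<Longrightarrow> tl_sat w i (clauses_ex_y D) \<longleftrightarrow> (\<exists>p<length w. clauses_sat w i p D)"
  by (auto simp: clauses_ex_y_def clauses_sat_def tl_sat_clause_ex_y)

lemma tl_sat_clauses_ex_x: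
  "j < length w \<Longrightarrow> tl_sat w j (clauses_ex_x D) \<longleftrightarrow> (\<exists>p<length w. clauses_sat w p j D)"
  by (auto simp: clauses_ex_x_def clauses_sat_def tl_sat_clause_ex_x)

lemma tl_sat_clauses_diag: "tl_sat w i (clauses_diag D) \<longleftrightarrow> clauses_sat w i i D"
  by (auto simp: clauses_diag_def clauses_sat_def tl_sat_clause_diag)

fun less_rel :: "var \<Rightarrow> rel" where
  "less_rel VX = Before"
| "less_rel VY = After"

lemma fo_sat_FBtw_eq_FThr: "fo_sat w s (FBtw a x y) \<longleftrightarrow> fo_sat w s (FThr a 1 x y)"
  using ex_letter_between_iff[of "s x" "s y" w a] by (auto simp: count_between_singleton Suc_le_eq)

definition threshold_clauses :: "'a \<Rightarrow> nat \<Rightarrow> var \<Rightarrow> var \<Rightarrow> 'a clause list" where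
  "threshold_clauses a k x y
    = (if x = y then [] else [(tl_true, tl_true, less_rel x, GAtom (Constr {a} CGe k))])"

lemma clauses_sat_threshold_clauses:
  "clauses_sat w (s VX) (s VY) (threshold_clauses a k x y) \<longleftrightarrow> fo_sat w s (FThr a k x y)"
  by (cases x; cases y) (auto simp: threshold_clauses_def count_between_singleton)

fun fo_clauses :: "'a fo2 \<Rightarrow> 'a clause list" where
  "fo_clauses (FLess x y) = (if x = y then [] else [(tl_true, tl_true, less_rel x, guard_true)])"
| "fo_clauses (FEq x y) = (if x = y then clauses_at_x tl_true else [(tl_true, tl_true, Same, guard_true)])"
| "fo_clauses (FLetter a x) = (if x = VX then clauses_at_x (TLetter a) else clauses_at_y (TLetter a))"
| "fo_clauses (FBtw a x y) = threshold_clauses a 1 x y"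
| "fo_clauses (FThr a k x y) = threshold_clauses a k x y"
| "fo_clauses (FNot \<phi>) = clauses_neg (fo_clauses \<phi>)"
| "fo_clauses (FAnd \<phi> \<psi>) = clauses_conj (fo_clauses \<phi>) (fo_clauses \<psi>)"
| "fo_clauses (FOr \<phi> \<psi>) = fo_clauses \<phi> @ fo_clauses \<psi>"
| "fo_clauses (FEx x \<phi>) = (if x = VY then clauses_at_x (clauses_ex_y (fo_clauses \<phi>))
                                    else clauses_at_y (clauses_ex_x (fo_clauses \<phi>)))"

lemma clauses_sat_fo_clauses:
  "s VX < length w \<Longrightarrow> s VY < length w \<Longrightarrow> fo_sat w s \<phi> \<longleftrightarrow> clauses_sat w (s VX) (s VY) (fo_clauses \<phi>)"
proof (induction \<phi> arbitrary: s)
  case (FLess x y)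
  then show ?case by (cases x; cases y) auto
next
  case (FEq x y)
  then show ?case by (cases x; cases y) auto
next
  case (FLetter a x)
  then show ?case by (cases x) auto
next
  case (FBtw a x y)
  show ?case
    unfolding fo_sat_FBtw_eq_FThr by (simp add: clauses_sat_threshold_clauses)
next
  case (FThr a k x y)
  then show ?case by (simp add: clauses_sat_threshold_clauses)
next
  case (FEx x \<phi>)
  then show ?case
    by (cases x) (auto simp: tl_sat_clauses_ex_y tl_sat_clauses_ex_x)
qed auto

lemma fo_lang_minus_Nil: "fo_lang \<phi> - {[]} = tl_lang (clauses_diag (fo_clauses \<phi>))"
  using clauses_sat_fo_clauses[of "\<lambda>_. 0" _ \<phi>]
  by (auto simp: fo_lang_def tl_lang_def tl_sat_clauses_diag)

section \<open>From temporal logic with invariant guards to FO2\<close>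

fun other_var :: "var \<Rightarrow> var" where
  "other_var VX = VY"
| "other_var VY = VX"

lemma other_var_neq [simp]: "other_var x \<noteq> x" "x \<noteq> other_var x"
  by (cases x; simp)+

lemma other_var_cases: "y \<noteq> x \<Longrightarrow> y = other_var x"
  by (cases x; cases y) auto

definition fo_false :: "'a fo2" where
  "fo_false = FEx VX (FNot (FEq VX VX))"

fun fo_Disj :: "'a fo2 list \<Rightarrow> 'a fo2" where
  "fo_Disj [] = fo_false"
| "fo_Disj (\<phi> # \<phi>s) = FOr \<phi> (fo_Disj \<phi>s)"

lemma fo_sat_Disj [simp]: "fo_sat w s (fo_Disj \<phi>s) \<longleftrightarrow> (\<exists>\<phi>\<in>set \<phi>s. fo_sat w s \<phi>)"
  by (induction \<phi>s) (auto simp: fo_false_def)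

lemma fo_free_Disj [simp]: "fo_free (fo_Disj \<phi>s) = (\<Union>\<phi>\<in>set \<phi>s. fo_free \<phi>)"
  by (induction \<phi>s) (auto simp: fo_false_def)

lemma uses_Thr_Disj [simp]: "uses_Thr (fo_Disj \<phi>s) \<longleftrightarrow> (\<exists>\<phi>\<in>set \<phi>s. uses_Thr \<phi>)"
  by (induction \<phi>s) (auto simp: fo_false_def)

text \<open>Only invariant guards \<open>#B = 0\<close> are translated faithfully; other guards become junk.\<close>

fun fo_of_guard :: "'a guard \<Rightarrow> var \<Rightarrow> var \<Rightarrow> 'a fo2" where
  "fo_of_guard (GAtom (Constr B r k)) u v = FNot (fo_Disj (map (\<lambda>b. FBtw b u v) (list_of B)))"
| "fo_of_guard _ u v = FEq u u"

lemma fo_sat_fo_of_guard: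
  assumes "guard_Inv (g :: 'a::finite guard)"
  shows "fo_sat w s (fo_of_guard g u v) \<longleftrightarrow> guard_sem w (s u) (s v) g"
proof -
  obtain B where "g = GAtom (Constr B CEq 0)"
    using assms by (auto simp: guard_Inv_def is_inv_constr_def)
  then show ?thesis by (auto simp: count_between_eq_0_iff)
qed

lemma fo_free_fo_of_guard: "fo_free (fo_of_guard g u v) \<subseteq> {u, v}"
  by (cases "(g, u, v)" rule: fo_of_guard.cases) auto

lemma uses_Thr_fo_of_guard: "\<not> uses_Thr (fo_of_guard g u v)"
  by (cases "(g, u, v)" rule: fo_of_guard.cases) auto

fun fo_of_tl :: "var \<Rightarrow> 'a tl \<Rightarrow> 'a fo2" where
  "fo_of_tl x (TLetter a) = FLetter a x"
| "fo_of_tl x (TAnd \<phi> \<psi>) = FAnd (fo_of_tl x \<phi>) (fo_of_tl x \<psi>)"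
| "fo_of_tl x (TOr \<phi> \<psi>) = FOr (fo_of_tl x \<phi>) (fo_of_tl x \<psi>)"
| "fo_of_tl x (TNot \<phi>) = FNot (fo_of_tl x \<phi>)"
| "fo_of_tl x (TF g \<phi>) = FEx (other_var x)
     (FAnd (FLess x (other_var x)) (FAnd (fo_of_guard g x (other_var x)) (fo_of_tl (other_var x) \<phi>)))"
| "fo_of_tl x (TP g \<phi>) = FEx (other_var x)
     (FAnd (FLess (other_var x) x) (FAnd (fo_of_guard g (other_var x) x) (fo_of_tl (other_var x) \<phi>)))"

lemma fo_sat_fo_of_tl:
  assumes "\<forall>g\<in>tl_guards \<phi>. guard_Inv g" "s x < length w"
  shows "fo_sat w s (fo_of_tl x \<phi>) \<longleftrightarrow> tl_sat w (s x) (\<phi> :: 'a::finite tl)"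
  using assms
proof (induction \<phi> arbitrary: x s)
  case (TF g \<phi>)
  have "fo_sat w (s(other_var x := p)) (fo_of_tl (other_var x) \<phi>) \<longleftrightarrow> tl_sat w p \<phi>"
    if "p < length w" for p
    using TF.IH[of "s(other_var x := p)" "other_var x"] TF.prems that
    by (simp del: fun_upd_apply add: fun_upd_same)
  with TF.prems show ?case
    by (auto simp: fo_sat_fo_of_guard)
next
  case (TP g \<phi>)
  have "fo_sat w (s(other_var x := p)) (fo_of_tl (other_var x) \<phi>) \<longleftrightarrow> tl_sat w p \<phi>"
    if "p < length w" for p
    using TP.IH[of "s(other_var x := p)" "other_var x"] TP.prems that
    by (simp del: fun_upd_apply add: fun_upd_same)
  with TP.prems show ?case
    by (auto simp: fo_sat_fo_of_guard dest: order.strict_trans)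
qed auto

lemma fo_free_fo_of_tl: "fo_free (fo_of_tl x \<phi>) \<subseteq> {x}"
proof (induction \<phi> arbitrary: x)
  case (TF g \<phi>)
  then show ?case using fo_free_fo_of_guard[of g x "other_var x"] by (auto dest: other_var_cases)
next
  case (TP g \<phi>)
  then show ?case using fo_free_fo_of_guard[of g "other_var x" x] by (auto dest: other_var_cases)
qed auto

lemma uses_Thr_fo_of_tl: "\<not> uses_Thr (fo_of_tl x \<phi>)"
  by (induction \<phi> arbitrary: x) (auto simp: uses_Thr_fo_of_guard)

definition tl_sentence :: "'a tl \<Rightarrow> 'a fo2" where
  "tl_sentence \<phi> = FEx VX (FAnd (FNot (FEx VY (FLess VY VX))) (fo_of_tl VX \<phi>))"

lemma fo_free_tl_sentence: "fo_free (tl_sentence \<phi>) = {}"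
  using fo_free_fo_of_tl[of VX \<phi>] by (auto simp: tl_sentence_def)

lemma uses_Thr_tl_sentence: "\<not> uses_Thr (tl_sentence \<phi>)"
  by (simp add: tl_sentence_def uses_Thr_fo_of_tl)

lemma fo_lang_tl_sentence:
  assumes "\<forall>g\<in>tl_guards \<phi>. guard_Inv g"
  shows "fo_lang (tl_sentence \<phi>) = tl_lang (\<phi> :: 'a::finite tl)"
proof -
  have "fo_sat w (\<lambda>_. 0) (tl_sentence \<phi>) \<longleftrightarrow> (\<exists>p<length w. p = 0 \<and> tl_sat w p \<phi>)" for w
    using fo_sat_fo_of_tl[OF assms, of "(\<lambda>_. 0)(VX := p)" VX w for p]
    by (auto simp: tl_sentence_def) (metis neq0_conv order.strict_trans)
  then show ?thesis
    unfolding fo_lang_def tl_lang_def by auto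
qed

fun fo_btw_to_thr :: "'a fo2 \<Rightarrow> 'a fo2" where
  "fo_btw_to_thr (FBtw a x y) = FThr a 1 x y"
| "fo_btw_to_thr (FNot \<phi>) = FNot (fo_btw_to_thr \<phi>)"
| "fo_btw_to_thr (FAnd \<phi> \<psi>) = FAnd (fo_btw_to_thr \<phi>) (fo_btw_to_thr \<psi>)"
| "fo_btw_to_thr (FOr \<phi> \<psi>) = FOr (fo_btw_to_thr \<phi>) (fo_btw_to_thr \<psi>)"
| "fo_btw_to_thr (FEx x \<phi>) = FEx x (fo_btw_to_thr \<phi>)"
| "fo_btw_to_thr \<phi> = \<phi>"

lemma fo_sat_btw_to_thr: "fo_sat w s (fo_btw_to_thr \<phi>) \<longleftrightarrow> fo_sat w s \<phi>"
proof (induction \<phi> arbitrary: s)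
  case (FBtw a x y)
  show ?case by (simp only: fo_btw_to_thr.simps fo_sat_FBtw_eq_FThr)
qed auto

lemma fo_free_btw_to_thr: "fo_free (fo_btw_to_thr \<phi>) = fo_free \<phi>"
  by (induction \<phi>) auto

lemma uses_Btw_btw_to_thr: "\<not> uses_Btw (fo_btw_to_thr \<phi>)"
  by (induction \<phi>) auto

lemma tl_family_mono: "(\<And>g. G g \<Longrightarrow> H g) \<Longrightarrow> tl_family G \<subseteq> tl_family H"
  unfolding tl_family_def by blast

lemma tl_family_eq_tl_family_Inv:
  fixes G :: "'a::finite guard \<Rightarrow> bool"
  assumes "\<And>g. guard_Inv g \<Longrightarrow> G g"
  shows "tl_family G = tl_family guard_Inv"
proof
  show "tl_family G \<subseteq> tl_family guard_Inv"
    using tl_lang_in_tl_family_Inv unfolding tl_family_def by blast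
  show "tl_family guard_Inv \<subseteq> tl_family G"
    using assms by (rule tl_family_mono)
qed

lemma tl_lang_in_fo2_Inv_family: "tl_lang \<phi> \<in> (fo2_Inv_family :: 'a::finite list set set)"
proof -
  have "\<forall>g\<in>tl_guards (inv_tl \<phi>). guard_Inv g"
    using guard_Inv_inv_tl by blast
  then have "tl_lang \<phi> = fo_lang (tl_sentence (inv_tl \<phi>))"
    by (simp add: fo_lang_tl_sentence tl_lang_inv_tl)
  then show ?thesis
    unfolding fo2_Inv_family_def
    by (intro CollectI exI[of _ "tl_sentence (inv_tl \<phi>)"])
      (simp add: fo_free_tl_sentence uses_Thr_tl_sentence)
qed

lemma insert_Nil_in_fo2_Inv_family:
  assumes "L \<in> fo2_Inv_family"
  shows "insert [] L \<in> fo2_Inv_family"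
proof -
  obtain \<phi> where \<phi>: "L = fo_lang \<phi>" "fo_free \<phi> = {}" "\<not> uses_Thr \<phi>"
    using assms unfolding fo2_Inv_family_def by blast
  let ?\<psi> = "FOr \<phi> (FNot (FEx VX (FEq VX VX)))"
  have "fo_lang ?\<psi> = insert [] L"
    unfolding \<phi>(1) fo_lang_def by auto
  then show ?thesis
    unfolding fo2_Inv_family_def by (intro CollectI exI[of _ ?\<psi>]) (simp add: \<phi>(2,3))
qed

lemma fo2_Th_family_subset_Inv: "fo2_Th_family \<subseteq> (fo2_Inv_family :: 'a::finite list set set)"
proof
  fix L :: "'a list set"
  assume "L \<in> fo2_Th_family"
  then obtain \<phi> where "L = fo_lang \<phi>"
    unfolding fo2_Th_family_def by blast
  then have "L - {[]} \<in> fo2_Inv_family"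
    by (simp add: fo_lang_minus_Nil tl_lang_in_fo2_Inv_family)
  moreover have "L = L - {[]} \<or> L = insert [] (L - {[]})"
    by blast
  ultimately show "L \<in> fo2_Inv_family"
    using insert_Nil_in_fo2_Inv_family by metis
qed

lemma fo2_Inv_family_subset_Th: "fo2_Inv_family \<subseteq> fo2_Th_family"
proof
  fix L
  assume "L \<in> fo2_Inv_family"
  then obtain \<phi> where "L = fo_lang \<phi>" "fo_free \<phi> = {}"
    unfolding fo2_Inv_family_def by blast
  moreover have "fo_lang (fo_btw_to_thr \<phi>) = fo_lang \<phi>"
    by (simp add: fo_lang_def fo_sat_btw_to_thr)
  ultimately show "L \<in> fo2_Th_family"
    unfolding fo2_Th_family_def
    by (intro CollectI exI[of _ "fo_btw_to_thr \<phi>"]) (simp add: fo_free_btw_to_thr uses_Btw_btw_to_thr)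
qed

lemma fo2_Inv_family_eq_Th: "fo2_Inv_family = (fo2_Th_family :: 'a::finite list set set)"
  using fo2_Inv_family_subset_Th fo2_Th_family_subset_Inv by (rule equalityI)

lemma fo2_Th_family_minus_Nil:
  "(\<lambda>L. L - {[]}) ` (fo2_Th_family :: 'a::finite list set set) = tl_family guard_Inv"
proof
  show "(\<lambda>L. L - {[]}) ` fo2_Th_family \<subseteq> tl_family (guard_Inv :: 'a guard \<Rightarrow> bool)"
    unfolding fo2_Th_family_def by (auto simp: fo_lang_minus_Nil tl_lang_in_tl_family_Inv)
  show "tl_family guard_Inv \<subseteq> (\<lambda>L. L - {[]}) ` (fo2_Th_family :: 'a list set set)"
  proof
    fix L :: "'a list set"
    assume "L \<in> tl_family guard_Inv"
    then obtain \<phi> where L: "L = tl_lang \<phi>"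
      unfolding tl_family_def by blast
    then have "L \<in> fo2_Th_family"
      using tl_lang_in_fo2_Inv_family fo2_Inv_family_eq_Th by blast
    moreover have "L = L - {[]}"
      using L by (auto simp: tl_lang_def)
    ultimately show "L \<in> (\<lambda>L. L - {[]}) ` fo2_Th_family"
      by (rule rev_image_eqI)
  qed
qed

theorem theorem2:
  shows "tl_family (guard_BTh :: ('a::finite) guard \<Rightarrow> bool) = tl_family guard_Th
       \<and> tl_family (guard_Inv :: 'a guard \<Rightarrow> bool) = tl_family guard_Th
       \<and> tl_family (guard_BInv :: 'a guard \<Rightarrow> bool) = tl_family guard_Th
       \<and> (fo2_Inv_family :: 'a list set set) = fo2_Th_family
       \<and> (\<lambda>L. L - {[]}) ` (fo2_Th_family :: 'a list set set) = tl_family guard_Th"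
proof -
  have Th: "tl_family (guard_Th :: 'a guard \<Rightarrow> bool) = tl_family guard_Inv"
    by (rule tl_family_eq_tl_family_Inv) (auto simp: guard_Inv_def guard_Th_def)
  have BTh: "tl_family (guard_BTh :: 'a guard \<Rightarrow> bool) = tl_family guard_Inv"
    by (rule tl_family_eq_tl_family_Inv) (simp add: guard_BTh_def)
  have BInv: "tl_family (guard_BInv :: 'a guard \<Rightarrow> bool) = tl_family guard_Inv"
    by (rule tl_family_eq_tl_family_Inv) (auto simp: guard_Inv_def guard_BInv_def)
  show ?thesis
    unfolding Th BTh BInv fo2_Inv_family_eq_Th fo2_Th_family_minus_Nil by simp
qed

end
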